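(* Let $\mathbf A$ be a super-paraorthomodular lattice and $\mathrm{Sh}(\mathbf A)=\{a\in A: a\land a'=0\}$. Then $(\mathrm{Sh}(\mathbf A),\leq,{}',0,1)$, with the order and involution inherited from $\mathbf A$, is a sub-orthomodular poset of $\mathbf A$.
   Context: A pseudo-Kleene lattice is an algebra $(A,\land,\lor,{}',0,1)$ that is a bounded lattice with an antitone involution ${}'$ ($x\leq y\Rightarrow y'\leq x'$, $x''=x$) satisfying $x\land x'\leq y\lor y'$. It is super-paraorthomodular if for all $x,y$: (SP1) $x\leq y$ and $x'\land y=(x\land x')\lor(y\land y')$ imply $y\land(x\lor x')=x\lor(y\land y')$; (SP2) $x\leq y$ implies $(x\land x')\lor(y\land y')=(x'\land y)\land(x'\land y)'$. An orthomodular poset is a bounded poset $(P,\leq,0,1)$ with antitone involution ${}'$ such that: $x\land x'=0$ for all $x$ (the meet exists in $P$ and is $0$); whenever $x\leq y'$ the join $x\lor y$ exists in $P$; and (paraorthomodularity) if $x\leq y$ and the meet $x'\land y$ exists and equals $0$, then $x=y$. A subset $B\subseteq A$ containing $0,1$ and closed under ${}'$ is a sub-orthomodular poset of $\mathbf A$ if $(B,\leq,{}',0,1)$ is an orthomodular poset and, for $x,y\in B$ with $x\leq y'$, the join of $x,y$ in $B$ equals their join in $\mathbf A$. *)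

theory Defs
  imports Main
begin

text \<open>The algebra A is the whole (bounded lattice) type 'a, with involution c.\<close>

definition pseudo_kleene :: "('a::bounded_lattice \<Rightarrow> 'a) \<Rightarrow> bool" where
  "pseudo_kleene c \<longleftrightarrow>
     (\<forall>x y. x \<le> y \<longrightarrow> c y \<le> c x) \<and>
     (\<forall>x. c (c x) = x) \<and>
     (\<forall>x y. inf x (c x) \<le> sup y (c y))"

definition super_paraorthomodular :: "('a::bounded_lattice \<Rightarrow> 'a) \<Rightarrow> bool" where
  "super_paraorthomodular c \<longleftrightarrow> pseudo_kleene c \<and>
     (\<forall>x y. x \<le> y \<and> inf (c x) y = sup (inf x (c x)) (inf y (c y))
        \<longrightarrow> inf y (sup x (c x)) = sup x (inf y (c y))) \<and>
     (\<forall>x y. x \<le> y \<longrightarrow>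
        sup (inf x (c x)) (inf y (c y)) = inf (inf (c x) y) (c (inf (c x) y)))"

definition is_inf_in :: "'a::order set \<Rightarrow> 'a \<Rightarrow> 'a \<Rightarrow> 'a \<Rightarrow> bool" where
  "is_inf_in P x y m \<longleftrightarrow> m \<in> P \<and> m \<le> x \<and> m \<le> y \<and>
     (\<forall>w\<in>P. w \<le> x \<and> w \<le> y \<longrightarrow> w \<le> m)"

definition is_sup_in :: "'a::order set \<Rightarrow> 'a \<Rightarrow> 'a \<Rightarrow> 'a \<Rightarrow> bool" where
  "is_sup_in P x y s \<longleftrightarrow> s \<in> P \<and> x \<le> s \<and> y \<le> s \<and>
     (\<forall>w\<in>P. x \<le> w \<and> y \<le> w \<longrightarrow> s \<le> w)"

definition orthomodular_poset :: "'a::order set \<Rightarrow> ('a \<Rightarrow> 'a) \<Rightarrow> 'a \<Rightarrow> 'a \<Rightarrow> bool" where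
  "orthomodular_poset P c z u \<longleftrightarrow>
     z \<in> P \<and> u \<in> P \<and> (\<forall>x\<in>P. z \<le> x \<and> x \<le> u) \<and>
     (\<forall>x\<in>P. c x \<in> P) \<and>
     (\<forall>x\<in>P. \<forall>y\<in>P. x \<le> y \<longrightarrow> c y \<le> c x) \<and>
     (\<forall>x\<in>P. c (c x) = x) \<and>
     (\<forall>x\<in>P. is_inf_in P x (c x) z) \<and>
     (\<forall>x\<in>P. \<forall>y\<in>P. x \<le> c y \<longrightarrow> (\<exists>s. is_sup_in P x y s)) \<and>
     (\<forall>x\<in>P. \<forall>y\<in>P. x \<le> y \<and> is_inf_in P (c x) y z \<longrightarrow> x = y)"

definition sub_orthomodular_poset :: "'a::bounded_lattice set \<Rightarrow> ('a \<Rightarrow> 'a) \<Rightarrow> bool" where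
  "sub_orthomodular_poset B c \<longleftrightarrow>
     bot \<in> B \<and> top \<in> B \<and> (\<forall>x\<in>B. c x \<in> B) \<and>
     orthomodular_poset B c bot top \<and>
     (\<forall>x\<in>B. \<forall>y\<in>B. x \<le> c y \<longrightarrow> (\<forall>s. is_sup_in B x y s \<longrightarrow> s = sup x y))"

definition Sh :: "('a::bounded_lattice \<Rightarrow> 'a) \<Rightarrow> 'a set" where
  "Sh c = {a. inf a (c a) = bot}"

end

theory Submission
  imports Defs
begin

text \<open>Sharp elements are closed under the involution and contain 0 and 1. Axiom (SP2) says that
  for sharp x \<le> y the element x' \<and> y is again sharp; by De Morgan this makes the join of
  orthogonal sharp elements sharp, so relative joins and meets in Sh agree with those of the
  lattice. Axiom (SP1) then yields paraorthomodularity: for sharp x \<le> y with x' \<and> y = 0 it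
  reads y \<and> 1 = x \<or> 0.\<close>

lemma is_sup_in_iff_sup:
  fixes a b :: "'a::lattice"
  assumes "sup a b \<in> P"
  shows "is_sup_in P a b s \<longleftrightarrow> s = sup a b"
  using assms unfolding is_sup_in_def by (auto intro: antisym)

lemma is_inf_in_iff_inf:
  fixes a b :: "'a::lattice"
  assumes "inf a b \<in> P"
  shows "is_inf_in P a b m \<longleftrightarrow> m = inf a b"
  using assms unfolding is_inf_in_def by (auto intro: antisym)

lemma bot_in_Sh: "bot \<in> Sh c"
  by (simp add: Sh_def)

context
  fixes c :: "'a::bounded_lattice \<Rightarrow> 'a"
  assumes pk: "pseudo_kleene c"
begin

lemma pseudo_kleene_antimono: "x \<le> y \<Longrightarrow> c y \<le> c x"
  using pk unfolding pseudo_kleene_def by blast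

lemma pseudo_kleene_involutive [simp]: "c (c x) = x"
  using pk unfolding pseudo_kleene_def by blast

lemma pseudo_kleene_le_compl_swap: "x \<le> c y \<Longrightarrow> y \<le> c x"
  using pseudo_kleene_antimono by fastforce

lemma pseudo_kleene_sup: "c (sup x y) = inf (c x) (c y)"
proof (rule antisym)
  show "c (sup x y) \<le> inf (c x) (c y)"
    by (simp add: pseudo_kleene_antimono)
  have "x \<le> c (inf (c x) (c y))" "y \<le> c (inf (c x) (c y))"
    by (simp_all add: pseudo_kleene_le_compl_swap)
  then show "inf (c x) (c y) \<le> c (sup x y)"
    by (simp add: pseudo_kleene_le_compl_swap)
qed

lemma pseudo_kleene_inf: "c (inf x y) = sup (c x) (c y)"
  using pseudo_kleene_sup[of "c x" "c y"] by (metis pseudo_kleene_involutive)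

lemma pseudo_kleene_bot [simp]: "c bot = top"
  using pseudo_kleene_le_compl_swap[of bot top] by (simp add: top_unique)

lemma pseudo_kleene_top [simp]: "c top = bot"
  using pseudo_kleene_involutive[of bot] by simp

lemma top_in_Sh: "top \<in> Sh c"
  by (simp add: Sh_def)

lemma compl_in_Sh: "x \<in> Sh c \<Longrightarrow> c x \<in> Sh c"
  by (simp add: Sh_def inf_commute)

lemma sup_compl_Sh: "x \<in> Sh c \<Longrightarrow> sup x (c x) = top"
  using pseudo_kleene_inf[of x "c x"] by (simp add: Sh_def sup_commute)

end

context
  fixes c :: "'a::bounded_lattice \<Rightarrow> 'a"
  assumes spo: "super_paraorthomodular c"
begin

lemma super_paraorthomodular_pseudo_kleene: "pseudo_kleene c"
  using spo unfolding super_paraorthomodular_def by blast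

lemma inf_compl_in_Sh:
  assumes "x \<in> Sh c" "y \<in> Sh c" "x \<le> y"
  shows "inf (c x) y \<in> Sh c"
proof -
  have "sup (inf x (c x)) (inf y (c y)) = inf (inf (c x) y) (c (inf (c x) y))"
    using spo assms(3) unfolding super_paraorthomodular_def by blast
  with assms(1,2) show ?thesis
    by (simp add: Sh_def)
qed

lemma sup_orthogonal_in_Sh:
  assumes x: "x \<in> Sh c" and y: "y \<in> Sh c" and xy: "x \<le> c y"
  shows "sup x y \<in> Sh c"
proof -
  note pk = super_paraorthomodular_pseudo_kleene
  have "inf (c x) (c y) \<in> Sh c"
    using inf_compl_in_Sh[OF x compl_in_Sh[OF pk y] xy] .
  then have "c (sup x y) \<in> Sh c"
    by (simp add: pseudo_kleene_sup[OF pk])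
  then show ?thesis
    using compl_in_Sh[OF pk] pseudo_kleene_involutive[OF pk] by metis
qed

lemma paraorthomodular_Sh:
  assumes x: "x \<in> Sh c" and y: "y \<in> Sh c" and xy: "x \<le> y" and "inf (c x) y = bot"
  shows "x = y"
proof -
  have "inf y (sup x (c x)) = sup x (inf y (c y))"
    using spo assms unfolding super_paraorthomodular_def Sh_def by auto
  then show ?thesis
    using x y sup_compl_Sh[OF super_paraorthomodular_pseudo_kleene] by (simp add: Sh_def)
qed

lemma orthomodular_poset_Sh: "orthomodular_poset (Sh c) c bot top"
proof -
  note pk = super_paraorthomodular_pseudo_kleene
  have "is_inf_in (Sh c) x (c x) bot" if "x \<in> Sh c" for x
    using that bot_in_Sh by (simp add: is_inf_in_iff_inf Sh_def)
  moreover have "is_sup_in (Sh c) x y (sup x y)" if "x \<in> Sh c" "y \<in> Sh c" "x \<le> c y" for x y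
    using sup_orthogonal_in_Sh[OF that] by (simp add: is_sup_in_iff_sup)
  moreover have "x = y" if "x \<in> Sh c" "y \<in> Sh c" "x \<le> y" "is_inf_in (Sh c) (c x) y bot" for x y
  proof -
    have "inf (c x) y \<in> Sh c"
      using inf_compl_in_Sh[OF that(1-3)] .
    then show ?thesis
      using paraorthomodular_Sh[OF that(1-3)] that(4) by (simp add: is_inf_in_iff_inf)
  qed
  ultimately show ?thesis
    unfolding orthomodular_poset_def
    using bot_in_Sh top_in_Sh[OF pk] compl_in_Sh[OF pk] pseudo_kleene_antimono[OF pk]
    by (simp add: pseudo_kleene_involutive[OF pk]) blast
qed

end

theorem lemma3p18:
  fixes c :: "'a::bounded_lattice \<Rightarrow> 'a"
  assumes "super_paraorthomodular c"
  shows "sub_orthomodular_poset (Sh c) c"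
proof -
  note pk = super_paraorthomodular_pseudo_kleene[OF assms]
  have "s = sup x y"
    if "x \<in> Sh c" "y \<in> Sh c" "x \<le> c y" "is_sup_in (Sh c) x y s" for x y s
    using that sup_orthogonal_in_Sh[OF assms that(1-3)] by (simp add: is_sup_in_iff_sup)
  then show ?thesis
    unfolding sub_orthomodular_poset_def
    using bot_in_Sh top_in_Sh[OF pk] compl_in_Sh[OF pk] orthomodular_poset_Sh[OF assms]
    by blast
qed

end
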